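(* Fix integers $L\ge1$, $n_0,\dots,n_L\ge1$, let $\boldsymbol{\mathcal W}=\mathbb{R}^{n_0\times n_1}\times\cdots\times\mathbb{R}^{n_{L-1}\times n_L}$, and for $\mathbf W=(W_1,\dots,W_L)\in\boldsymbol{\mathcal W}$ let $F(\mathbf W,\cdot)=\Lambda_L(W_L,\cdot)\circ\cdots\circ\Lambda_1(W_1,\cdot)\colon\mathbb{R}^{n_0}\to\mathbb{R}^{n_L}$ with $\Lambda_l(W_l,x)=\sigma_l(W_l^\top x+b_l)$, fixed biases $b_l$, each $\sigma_l$ ($l<L$) applying a smooth, monotonically increasing, Lipschitz scalar function entrywise, and $\sigma_L=\mathrm{id}$. Let $\boldsymbol{\mathcal X}\subset\mathbb{R}^{n_0}$ be a compact smooth submanifold (the input space). Then for every rank-deficient $\mathbf W_1\in\boldsymbol{\mathcal W}$ and every $\epsilon>0$ there exists a full-rank $\mathbf W_2\in\boldsymbol{\mathcal W}$ such that $\|F(\mathbf W_2,x)-F(\mathbf W_1,x)\|_\infty\le\epsilon$ for all $x\in\boldsymbol{\mathcal X}$.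
   Context: $\mathbf W=(W_1,\dots,W_L)$ is called full-rank if every matrix $W_l$ has full rank $\min(n_{l-1},n_l)$, and rank-deficient otherwise. $\|\cdot\|_\infty$ is the max-norm on $\mathbb{R}^{n_L}$. The paper assumes throughout that the input space is a compact smooth manifold. *)

theory Defs
  imports "HOL-Analysis.Analysis" "Jordan_Normal_Form.DL_Rank"
begin

definition smooth_fun :: "(real \<Rightarrow> real) \<Rightarrow> bool" where
  "smooth_fun f \<longleftrightarrow> (\<forall>k x. ((deriv ^^ k) f) differentiable (at x))"

definition admissible_activation :: "(real \<Rightarrow> real) \<Rightarrow> bool" where
  "admissible_activation f \<longleftrightarrow> smooth_fun f \<and> mono f \<and> (\<exists>C. C-lipschitz_on UNIV f)"

definition full_rank_mat :: "real mat \<Rightarrow> bool" where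
  "full_rank_mat A \<longleftrightarrow> vec_space.rank (dim_row A) A = min (dim_row A) (dim_col A)"

text \<open>Weight space for layer widths ns = [n_0, ..., n_L]: lists [W_1, ..., W_L]
  with W_l an n_(l-1) x n_l matrix.\<close>

definition weight_space :: "nat list \<Rightarrow> real mat list set" where
  "weight_space ns = {Ws. length Ws + 1 = length ns \<and>
     (\<forall>l < length Ws. Ws ! l \<in> carrier_mat (ns ! l) (ns ! Suc l))}"

definition full_rank_weights :: "real mat list \<Rightarrow> bool" where
  "full_rank_weights Ws \<longleftrightarrow> (\<forall>W \<in> set Ws. full_rank_mat W)"

definition layer :: "(real \<Rightarrow> real) \<Rightarrow> real mat \<Rightarrow> real vec \<Rightarrow> real vec \<Rightarrow> real vec" where
  "layer s W b x = map_vec s (transpose_mat W *\<^sub>v x + b)"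

fun net_aux :: "nat \<Rightarrow> (nat \<Rightarrow> real \<Rightarrow> real) \<Rightarrow> (nat \<Rightarrow> real vec) \<Rightarrow> real mat list \<Rightarrow> real vec \<Rightarrow> real vec" where
  "net_aux l s b [] x = x"
| "net_aux l s b (W # Ws) x = net_aux (Suc l) s b Ws (layer (s l) W (b l) x)"

text \<open>F(W, x) = Lambda_L(W_L, .) o ... o Lambda_1(W_1, .) applied to x (layers indexed from 1).\<close>

definition net :: "(nat \<Rightarrow> real \<Rightarrow> real) \<Rightarrow> (nat \<Rightarrow> real vec) \<Rightarrow> real mat list \<Rightarrow> real vec \<Rightarrow> real vec" where
  "net s b Ws x = net_aux 1 s b Ws x"

definition max_norm :: "real vec \<Rightarrow> real" where
  "max_norm v = (MAX i \<in> {..<dim_vec v}. \<bar>vec_index v i\<bar>)"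

text \<open>Identification of R^n (carrier_vec n) with the functions nat => real vanishing
  outside {0..<n}; this is a homeomorphism onto its image for the product topology, so
  it transports the Euclidean topology (used to state compactness).\<close>

definition vec_embed :: "real vec \<Rightarrow> (nat \<Rightarrow> real)" where
  "vec_embed v = (\<lambda>i. if i < dim_vec v then vec_index v i else 0)"

end

theory Submission
  imports Defs "Jordan_Normal_Form.DL_Rank_Submatrix" "Jordan_Normal_Form.Char_Poly"
begin

(* A matrix becomes full rank after adding t > 0 on
   its diagonal for all but finitely many t, since the determinant of its shifted leading square
   block is a monic polynomial in t. Of the activation hypotheses only the Lipschitz bounds matter:
   they make each layer uniformly continuous jointly in weights and input on bounded inputs, and the
   compact input space is bounded, so induction over the layers turns small entrywise weight
   perturbations into a uniformly small change of the output. *)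

lemma (in vec_space) rank_le_nr:
  assumes "A \<in> carrier_mat n nc"
  shows "rank A \<le> n"
proof -
  have "subspace class_ring (span (set (cols A))) V"
    using assms by (metis cols_dim carrier_matD(1) span_is_subspace)
  then show ?thesis
    unfolding rank_def
    using subspace_dim[OF _ fin_dim fin_dim_span_cols[OF assms]] dim_is_n by metis
qed

lemma pick_lessThan:
  assumes "i < k"
  shows "pick {..<k} i = i"
proof -
  have "{a \<in> {..<k}. a < i} = {..<i}" using assms by auto
  then show ?thesis using pick_card_in_set[of i "{..<k}"] assms by simp
qed

lemma card_lessThan_restrict:
  assumes "k \<le> n"
  shows "card {i. i < n \<and> i \<in> {..<k}} = k"
proof -
  have "{i. i < n \<and> i \<in> {..<k}} = {..<k}" using assms by auto
  then show ?thesis by simp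
qed

lemma leading_submatrix:
  assumes "A \<in> carrier_mat n m" "k \<le> n" "k \<le> m"
  shows "submatrix A {..<k} {..<k} \<in> carrier_mat k k"
    and "\<And>i j. i < k \<Longrightarrow> j < k \<Longrightarrow> submatrix A {..<k} {..<k} $$ (i, j) = A $$ (i, j)"
proof -
  show "submatrix A {..<k} {..<k} \<in> carrier_mat k k"
    using assms by (auto simp: dim_submatrix card_lessThan_restrict simp del: lessThan_iff)
  fix i j assume "i < k" "j < k"
  then show "submatrix A {..<k} {..<k} $$ (i, j) = A $$ (i, j)"
    using assms by (subst submatrix_index)
      (auto simp: card_lessThan_restrict pick_lessThan simp del: lessThan_iff)
qed

lemma full_rank_if_leading_minor:
  assumes A: "A \<in> carrier_mat n m"
    and det: "det (submatrix A {..<min n m} {..<min n m}) \<noteq> 0"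
  shows "full_rank_mat A"
proof -
  have "min n m \<le> vec_space.rank n A"
    using vec_space.rank_gt_minor[OF A det] card_lessThan_restrict[of "min n m" m] by simp
  with vec_space.rank_le_nc[OF A] vec_space.rank_le_nr[OF A] A show ?thesis
    unfolding full_rank_mat_def by auto
qed

lemma finite_singular_shifts:
  fixes B :: "'a :: field mat"
  assumes B: "B \<in> carrier_mat k k"
  shows "finite {t. det (B + t \<cdot>\<^sub>m 1\<^sub>m k) = 0}"
proof -
  have mB: "- B \<in> carrier_mat k k" using B by simp
  have "char_poly (- B) \<noteq> 0"
    using degree_monic_char_poly[OF mB] by (metis coeff_0 zero_neq_one)
  moreover have "det (B + t \<cdot>\<^sub>m 1\<^sub>m k) = poly (char_poly (- B)) t" for t
  proof -
    have "- char_matrix (- B) t = B + t \<cdot>\<^sub>m 1\<^sub>m k"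
      by (rule eq_matI) (use B in \<open>auto simp: char_matrix_def\<close>)
    then show ?thesis by (simp add: char_poly_matrix[OF mB])
  qed
  ultimately show ?thesis by (simp add: poly_roots_finite)
qed

definition vec_close :: "real \<Rightarrow> real vec \<Rightarrow> real vec \<Rightarrow> bool" where
  "vec_close d x y \<longleftrightarrow> dim_vec x = dim_vec y \<and> (\<forall>i < dim_vec y. \<bar>x $ i - y $ i\<bar> \<le> d)"

definition vec_bounded :: "real \<Rightarrow> real vec \<Rightarrow> bool" where
  "vec_bounded B x \<longleftrightarrow> (\<forall>i < dim_vec x. \<bar>x $ i\<bar> \<le> B)"

definition mat_close :: "real \<Rightarrow> real mat \<Rightarrow> real mat \<Rightarrow> bool" where
  "mat_close d V W \<longleftrightarrow> V \<in> carrier_mat (dim_row W) (dim_col W) \<and>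
     (\<forall>i < dim_row W. \<forall>j < dim_col W. \<bar>V $$ (i, j) - W $$ (i, j)\<bar> \<le> d)"

abbreviation weights_close :: "real \<Rightarrow> real mat list \<Rightarrow> real mat list \<Rightarrow> bool" where
  "weights_close d \<equiv> list_all2 (mat_close d)"

lemma vec_close_refl: "d \<ge> 0 \<Longrightarrow> vec_close d x x"
  unfolding vec_close_def by simp

lemma vec_close_mono: "vec_close d x y \<Longrightarrow> d \<le> e \<Longrightarrow> vec_close e x y"
  unfolding vec_close_def by force

lemma mat_close_mono: "mat_close d V W \<Longrightarrow> d \<le> e \<Longrightarrow> mat_close e V W"
  unfolding mat_close_def by force

lemma full_rank_perturbation:
  fixes A :: "real mat"
  assumes "\<delta> > 0"
  shows "\<exists>V. full_rank_mat V \<and> mat_close \<delta> V A"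
proof -
  define n m where "n = dim_row A" and "m = dim_col A"
  define k where "k = min n m"
  have A: "A \<in> carrier_mat n m" unfolding n_def m_def by simp
  have kn: "k \<le> n" "k \<le> m" unfolding k_def by simp_all
  define B where "B = submatrix A {..<k} {..<k}"
  have B: "B \<in> carrier_mat k k" unfolding B_def by (rule leading_submatrix(1)[OF A kn])
  have "infinite ({0<..\<delta>} - {t. det (B + t \<cdot>\<^sub>m 1\<^sub>m k) = 0})"
    using infinite_Ioc[OF assms] finite_singular_shifts[OF B] by (rule Diff_infinite_finite[rotated])
  then obtain t where "t \<in> {0<..\<delta>} - {t. det (B + t \<cdot>\<^sub>m 1\<^sub>m k) = 0}"
    using infinite_imp_nonempty by blast
  then have t: "0 < t" "t \<le> \<delta>" "det (B + t \<cdot>\<^sub>m 1\<^sub>m k) \<noteq> 0" by auto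
  define V where "V = A + mat n m (\<lambda>(i, j). if i = j then t else 0)"
  have V: "V \<in> carrier_mat n m" unfolding V_def using A by simp
  have "submatrix V {..<k} {..<k} = B + t \<cdot>\<^sub>m 1\<^sub>m k"
  proof (rule eq_matI)
    fix i j assume "i < dim_row (B + t \<cdot>\<^sub>m 1\<^sub>m k)" "j < dim_col (B + t \<cdot>\<^sub>m 1\<^sub>m k)"
    then have ij: "i < k" "j < k" using B by auto
    then have "i < n" "j < m" using kn by auto
    moreover have "B $$ (i, j) = A $$ (i, j)"
      unfolding B_def by (rule leading_submatrix(2)[OF A kn ij])
    ultimately show "submatrix V {..<k} {..<k} $$ (i, j) = (B + t \<cdot>\<^sub>m 1\<^sub>m k) $$ (i, j)"
      using ij A B unfolding leading_submatrix(2)[OF V kn ij] by (simp add: V_def)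
  qed (use B leading_submatrix(1)[OF V kn] in auto)
  then have "full_rank_mat V"
    using full_rank_if_leading_minor[OF V] t(3) unfolding k_def by simp
  moreover have "mat_close \<delta> V A"
    unfolding mat_close_def using A V t by (auto simp: V_def n_def m_def)
  ultimately show ?thesis by blast
qed

lemma full_rank_weights_dense:
  assumes "Ws \<in> weight_space ns" "\<delta> > 0"
  shows "\<exists>Vs \<in> weight_space ns. full_rank_weights Vs \<and> weights_close \<delta> Vs Ws"
proof -
  obtain f where f: "\<And>W. full_rank_mat (f W) \<and> mat_close \<delta> (f W) W"
    using full_rank_perturbation[OF assms(2)] by metis
  have "f W \<in> carrier_mat n m" if "W \<in> carrier_mat n m" for W n m
    using f[of W] that unfolding mat_close_def by auto
  then have "map f Ws \<in> weight_space ns"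
    using assms(1) unfolding weight_space_def by auto
  moreover have "weights_close \<delta> (map f Ws) Ws"
    by (simp add: list_all2_conv_all_nth f)
  ultimately show ?thesis
    unfolding full_rank_weights_def by (intro bexI[where x = "map f Ws"] conjI) (auto simp: f)
qed

lemma finite_abs_bounded:
  fixes f :: "'a \<Rightarrow> real"
  assumes "finite S"
  shows "\<exists>M>0. \<forall>p\<in>S. \<bar>f p\<bar> \<le> M"
  using finite_imp_bounded[OF finite_imageI[OF assms, of f]] unfolding bounded_pos by auto

lemma abs_mult_diff_le:
  fixes v w x y :: real
  assumes "\<bar>v - w\<bar> \<le> d" "\<bar>y - x\<bar> \<le> d" "\<bar>w\<bar> \<le> M" "\<bar>x\<bar> \<le> B" "d \<le> 1"
  shows "\<bar>v * y - w * x\<bar> \<le> d * (B + 1 + M)"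
proof -
  have "\<bar>y\<bar> \<le> B + 1" using assms by linarith
  have "v * y - w * x = (v - w) * y + w * (y - x)" by (simp add: algebra_simps)
  then have "\<bar>v * y - w * x\<bar> \<le> \<bar>v - w\<bar> * \<bar>y\<bar> + \<bar>w\<bar> * \<bar>y - x\<bar>"
    by (simp add: abs_mult[symmetric] abs_triangle_ineq)
  also have "\<dots> \<le> d * (B + 1) + M * d"
    using assms \<open>\<bar>y\<bar> \<le> B + 1\<close> by (intro add_mono mult_mono) auto
  finally show ?thesis by (simp add: algebra_simps)
qed

lemma layer_dim [simp]: "dim_vec (layer s W b x) = dim_vec b"
  by (simp add: layer_def)

lemma layer_index:
  assumes "W \<in> carrier_mat k m" "b \<in> carrier_vec m" "dim_vec x = k" "i < m"
  shows "layer s W b x $ i = s ((\<Sum>j<k. W $$ (j, i) * x $ j) + b $ i)"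
proof -
  have "(transpose_mat W *\<^sub>v x) $ i = col W i \<bullet> x"
    using assms by simp
  also have "\<dots> = (\<Sum>j<k. W $$ (j, i) * x $ j)"
    using assms unfolding scalar_prod_def by (auto intro!: sum.cong simp: lessThan_atLeast0)
  finally show ?thesis using assms unfolding layer_def by simp
qed

lemma layer_perturbation_le:
  assumes lip: "C-lipschitz_on UNIV s"
    and W: "W \<in> carrier_mat k m" and b: "b \<in> carrier_vec m" and x: "dim_vec x = k"
    and M: "\<forall>j<k. \<forall>i<m. \<bar>W $$ (j, i)\<bar> \<le> M"
    and "vec_bounded B x" "vec_close d y x" "mat_close d V W" "d \<le> 1"
  shows "vec_close (C * (k * (d * (B + 1 + M)))) (layer s V b y) (layer s W b x)"
  unfolding vec_close_def
proof (intro conjI allI impI)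
  have V: "V \<in> carrier_mat k m" and y: "dim_vec y = k"
    using W x \<open>mat_close d V W\<close> \<open>vec_close d y x\<close> unfolding mat_close_def vec_close_def by auto
  show "dim_vec (layer s V b y) = dim_vec (layer s W b x)" by simp
  fix i assume "i < dim_vec (layer s W b x)"
  then have i: "i < m" using b by simp
  let ?u = "(\<Sum>j<k. V $$ (j, i) * y $ j) + b $ i"
  let ?w = "(\<Sum>j<k. W $$ (j, i) * x $ j) + b $ i"
  have "\<bar>V $$ (j, i) * y $ j - W $$ (j, i) * x $ j\<bar> \<le> d * (B + 1 + M)" if "j < k" for j
    using assms that i W unfolding vec_close_def vec_bounded_def mat_close_def
    by (intro abs_mult_diff_le) auto
  then have "\<bar>?u - ?w\<bar> \<le> k * (d * (B + 1 + M))"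
    using sum_abs[of "\<lambda>j. V $$ (j, i) * y $ j - W $$ (j, i) * x $ j" "{..<k}"]
      sum_mono[of "{..<k}" "\<lambda>j. \<bar>V $$ (j, i) * y $ j - W $$ (j, i) * x $ j\<bar>" "\<lambda>_. d * (B + 1 + M)"]
    by (simp add: sum_subtractf)
  moreover have "\<bar>s ?u - s ?w\<bar> \<le> C * \<bar>?u - ?w\<bar>"
    using lipschitz_onD[OF lip, of ?u ?w] by (simp add: dist_real_def)
  ultimately have "\<bar>s ?u - s ?w\<bar> \<le> C * (k * (d * (B + 1 + M)))"
    using lipschitz_on_nonneg[OF lip] by (meson mult_left_mono order_trans)
  then show "\<bar>layer s V b y $ i - layer s W b x $ i\<bar> \<le> C * (k * (d * (B + 1 + M)))"
    using layer_index[OF V b y i] layer_index[OF W b x i] by simp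
qed

lemma layer_bound_le:
  fixes b :: "real vec"
  assumes lip: "C-lipschitz_on UNIV s"
    and W: "W \<in> carrier_mat k m" and b: "b \<in> carrier_vec m" and x: "dim_vec x = k"
    and M: "\<forall>j<k. \<forall>i<m. \<bar>W $$ (j, i)\<bar> \<le> M" and Mb: "\<forall>i<m. \<bar>b $ i\<bar> \<le> Mb"
    and "vec_bounded B x"
  shows "vec_bounded (\<bar>s 0\<bar> + C * (k * (M * B) + Mb)) (layer s W b x)"
  unfolding vec_bounded_def
proof (intro allI impI)
  fix i assume "i < dim_vec (layer s W b x)"
  then have i: "i < m" using b by simp
  let ?w = "(\<Sum>j<k. W $$ (j, i) * x $ j) + b $ i"
  have "\<bar>W $$ (j, i) * x $ j\<bar> \<le> M * B" if "j < k" for j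
    using assms that i unfolding vec_bounded_def abs_mult by (intro mult_mono) force+
  then have "(\<Sum>j<k. \<bar>W $$ (j, i) * x $ j\<bar>) \<le> k * (M * B)"
    using sum_mono[of "{..<k}" "\<lambda>j. \<bar>W $$ (j, i) * x $ j\<bar>" "\<lambda>_. M * B"] by simp
  then have "\<bar>?w\<bar> \<le> k * (M * B) + Mb"
    using sum_abs[of "\<lambda>j. W $$ (j, i) * x $ j" "{..<k}"] Mb[rule_format, OF i]
      abs_triangle_ineq[of "\<Sum>j<k. W $$ (j, i) * x $ j" "b $ i"]
    by linarith
  moreover have "\<bar>s ?w\<bar> \<le> \<bar>s 0\<bar> + C * \<bar>?w\<bar>"
    using lipschitz_onD[OF lip, of ?w 0] by (simp add: dist_real_def)
  ultimately have "\<bar>s ?w\<bar> \<le> \<bar>s 0\<bar> + C * (k * (M * B) + Mb)"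
    using lipschitz_on_nonneg[OF lip] by (meson add_left_mono mult_left_mono order_trans)
  then show "\<bar>layer s W b x $ i\<bar> \<le> \<bar>s 0\<bar> + C * (k * (M * B) + Mb)"
    using layer_index[OF W b x i] by simp
qed

lemma layer_uniformly_continuous:
  assumes lip: "C-lipschitz_on UNIV s"
    and W: "W \<in> carrier_mat k m" and b: "b \<in> carrier_vec m" and "B \<ge> 0" "\<epsilon> > 0"
  shows "\<exists>\<delta>>0. \<forall>x y V. dim_vec x = k \<longrightarrow> vec_bounded B x \<longrightarrow> vec_close \<delta> y x \<longrightarrow>
           mat_close \<delta> V W \<longrightarrow> vec_close \<epsilon> (layer s V b y) (layer s W b x)"
proof -
  obtain M where M: "M > 0" "\<forall>(j, i) \<in> {..<k} \<times> {..<m}. \<bar>W $$ (j, i)\<bar> \<le> M"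
    using finite_abs_bounded[of "{..<k} \<times> {..<m}" "\<lambda>(j, i). W $$ (j, i)"] by auto
  define K where "K = C * (k * (B + 1 + M))"
  have "K \<ge> 0" unfolding K_def using lipschitz_on_nonneg[OF lip] M \<open>B \<ge> 0\<close> by simp
  define \<delta> where "\<delta> = min 1 (\<epsilon> / (K + 1))"
  have "\<delta> > 0" unfolding \<delta>_def using \<open>K \<ge> 0\<close> \<open>\<epsilon> > 0\<close> by simp
  have "C * (k * (\<delta> * (B + 1 + M))) = \<delta> * K" unfolding K_def by (simp add: algebra_simps)
  also have "\<dots> \<le> \<epsilon> / (K + 1) * K" unfolding \<delta>_def using \<open>K \<ge> 0\<close> by (intro mult_right_mono) auto
  also have "\<dots> \<le> \<epsilon>" using \<open>K \<ge> 0\<close> \<open>\<epsilon> > 0\<close> by (simp add: field_simps)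
  finally have "C * (k * (\<delta> * (B + 1 + M))) \<le> \<epsilon>" .
  moreover have "\<delta> \<le> 1" unfolding \<delta>_def by simp
  ultimately show ?thesis
    using \<open>\<delta> > 0\<close> M(2) layer_perturbation_le[OF lip W b] vec_close_mono by blast
qed

lemma layer_bounded:
  fixes b :: "real vec"
  assumes lip: "C-lipschitz_on UNIV s"
    and W: "W \<in> carrier_mat k m" and b: "b \<in> carrier_vec m" and "B \<ge> 0"
  shows "\<exists>B'\<ge>0. \<forall>x. dim_vec x = k \<longrightarrow> vec_bounded B x \<longrightarrow> vec_bounded B' (layer s W b x)"
proof -
  obtain M where M: "M > 0" "\<forall>(j, i) \<in> {..<k} \<times> {..<m}. \<bar>W $$ (j, i)\<bar> \<le> M"
    using finite_abs_bounded[of "{..<k} \<times> {..<m}" "\<lambda>(j, i). W $$ (j, i)"] by auto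
  obtain Mb where Mb: "Mb > 0" "\<forall>i \<in> {..<m}. \<bar>b $ i\<bar> \<le> Mb"
    using finite_abs_bounded[of "{..<m}" "\<lambda>i. b $ i"] by auto
  have "\<bar>s 0\<bar> + C * (k * (M * B) + Mb) \<ge> 0"
    using lipschitz_on_nonneg[OF lip] M Mb \<open>B \<ge> 0\<close> by simp
  then show ?thesis
    using M(2) Mb(2) layer_bound_le[OF lip W b] by blast
qed

definition lipschitz_layers ::
    "(nat \<Rightarrow> real \<Rightarrow> real) \<Rightarrow> (nat \<Rightarrow> real vec) \<Rightarrow> nat \<Rightarrow> nat list \<Rightarrow> real mat list \<Rightarrow> bool" where
  "lipschitz_layers s b l ns Ws \<longleftrightarrow> length ns = length Ws + 1 \<and>
     (\<forall>q < length Ws. Ws ! q \<in> carrier_mat (ns ! q) (ns ! Suc q) \<and>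
        b (l + q) \<in> carrier_vec (ns ! Suc q) \<and> (\<exists>C. C-lipschitz_on UNIV (s (l + q))))"

lemma lipschitz_layers_Nil: "lipschitz_layers s b l ns [] \<longleftrightarrow> (\<exists>n. ns = [n])"
  unfolding lipschitz_layers_def by (auto simp: length_Suc_conv)

lemma lipschitz_layers_Cons:
  "lipschitz_layers s b l ns (W # Ws) \<longleftrightarrow> (\<exists>n ns'. ns = n # ns' \<and>
     W \<in> carrier_mat n (ns' ! 0) \<and> b l \<in> carrier_vec (ns' ! 0) \<and>
     (\<exists>C. C-lipschitz_on UNIV (s l)) \<and> lipschitz_layers s b (Suc l) ns' Ws)"
  unfolding lipschitz_layers_def by (cases ns) (auto simp: All_less_Suc2)

lemma net_aux_dim:
  "lipschitz_layers s b l ns Ws \<Longrightarrow> dim_vec x = ns ! 0 \<Longrightarrow> dim_vec (net_aux l s b Ws x) = last ns"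
proof (induction Ws arbitrary: l ns x)
  case Nil
  then show ?case by (auto simp: lipschitz_layers_Nil)
next
  case (Cons W Ws)
  then obtain n ns' where ns: "ns = n # ns'" "b l \<in> carrier_vec (ns' ! 0)"
    and tail: "lipschitz_layers s b (Suc l) ns' Ws"
    by (auto simp: lipschitz_layers_Cons)
  moreover have "ns' \<noteq> []" using tail unfolding lipschitz_layers_def by auto
  ultimately show ?case using Cons.IH[OF tail] by simp
qed

lemma net_aux_uniformly_continuous:
  assumes "lipschitz_layers s b l ns Ws" "B \<ge> 0" "\<epsilon> > 0"
  shows "\<exists>\<delta>>0. \<forall>x y Vs. dim_vec x = ns ! 0 \<longrightarrow> vec_bounded B x \<longrightarrow> vec_close \<delta> y x \<longrightarrow>
           weights_close \<delta> Vs Ws \<longrightarrow> vec_close \<epsilon> (net_aux l s b Vs y) (net_aux l s b Ws x)"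
  using assms
proof (induction Ws arbitrary: l ns B)
  case Nil
  then show ?case by auto
next
  case (Cons W Ws)
  then obtain n ns' C where ns: "ns = n # ns'" and W: "W \<in> carrier_mat n (ns' ! 0)"
    and b: "b l \<in> carrier_vec (ns' ! 0)" and lip: "C-lipschitz_on UNIV (s l)"
    and tail: "lipschitz_layers s b (Suc l) ns' Ws"
    by (auto simp: lipschitz_layers_Cons)
  obtain B' where "B' \<ge> 0"
    and B': "\<forall>x. dim_vec x = n \<longrightarrow> vec_bounded B x \<longrightarrow> vec_bounded B' (layer (s l) W (b l) x)"
    using layer_bounded[OF lip W b \<open>B \<ge> 0\<close>] by blast
  obtain \<delta>' where "\<delta>' > 0" and \<delta>': "\<forall>x y Vs. dim_vec x = ns' ! 0 \<longrightarrow> vec_bounded B' x \<longrightarrow>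
      vec_close \<delta>' y x \<longrightarrow> weights_close \<delta>' Vs Ws \<longrightarrow>
      vec_close \<epsilon> (net_aux (Suc l) s b Vs y) (net_aux (Suc l) s b Ws x)"
    using Cons.IH[OF tail \<open>B' \<ge> 0\<close> \<open>\<epsilon> > 0\<close>] by blast
  obtain \<delta>\<^sub>0 where "\<delta>\<^sub>0 > 0" and \<delta>\<^sub>0: "\<forall>x y V. dim_vec x = n \<longrightarrow> vec_bounded B x \<longrightarrow>
      vec_close \<delta>\<^sub>0 y x \<longrightarrow> mat_close \<delta>\<^sub>0 V W \<longrightarrow>
      vec_close \<delta>' (layer (s l) V (b l) y) (layer (s l) W (b l) x)"
    using layer_uniformly_continuous[OF lip W b \<open>B \<ge> 0\<close> \<open>\<delta>' > 0\<close>] by blast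
  show ?case
  proof (intro exI[of _ "min \<delta>\<^sub>0 \<delta>'"] conjI allI impI)
    fix x y Vs
    assume x: "dim_vec x = ns ! 0" "vec_bounded B x" and y: "vec_close (min \<delta>\<^sub>0 \<delta>') y x"
      and Vs: "weights_close (min \<delta>\<^sub>0 \<delta>') Vs (W # Ws)"
    then obtain V Vs' where "Vs = V # Vs'" and V: "mat_close (min \<delta>\<^sub>0 \<delta>') V W"
      and Vs': "weights_close (min \<delta>\<^sub>0 \<delta>') Vs' Ws"
      by (auto simp: list_all2_Cons2)
    moreover have "mat_close \<delta>\<^sub>0 V W" using V mat_close_mono by simp
    moreover have "weights_close \<delta>' Vs' Ws"
      using Vs' by (rule list_all2_mono) (simp add: mat_close_mono)
    moreover have "vec_close \<delta>\<^sub>0 y x" using y vec_close_mono by auto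
    ultimately show "vec_close \<epsilon> (net_aux l s b Vs y) (net_aux l s b (W # Ws) x)"
      using x ns b \<delta>' B' \<delta>\<^sub>0 by simp
  qed (use \<open>\<delta>\<^sub>0 > 0\<close> \<open>\<delta>' > 0\<close> in simp)
qed

lemma compact_vec_embed_imp_bounded:
  assumes "compact (vec_embed ` X)" "X \<subseteq> carrier_vec n"
  shows "\<exists>B\<ge>0. \<forall>x\<in>X. vec_bounded B x"
proof -
  have "compact (\<Union>i<n. (\<lambda>f. f i) ` vec_embed ` X)"
    using assms(1) by (intro compact_UN ballI compact_continuous_image)
      (auto intro: continuous_on_subset[OF continuous_on_product_coordinates])
  then obtain B where "B > 0" and B: "\<forall>i<n. \<forall>x\<in>X. \<bar>vec_embed x i\<bar> \<le> B"
    unfolding bounded_pos[symmetric] by (auto dest!: compact_imp_bounded simp: bounded_pos)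
  have "vec_bounded B x" if "x \<in> X" for x
    using B that assms(2) unfolding vec_bounded_def vec_embed_def by fastforce
  then show ?thesis using \<open>B > 0\<close> by (intro exI[of _ B]) auto
qed

lemma max_norm_diff_le:
  assumes "vec_close e v w" "dim_vec w > 0"
  shows "max_norm (v - w) \<le> e"
  using assms unfolding max_norm_def vec_close_def by (subst Max_le_iff) auto

theorem proposition1:
  fixes L :: nat and ns :: "nat list" and s :: "nat \<Rightarrow> real \<Rightarrow> real"
    and b :: "nat \<Rightarrow> real vec" and X :: "real vec set"
    and W1 :: "real mat list" and \<epsilon> :: real
  assumes "L \<ge> 1"
    and "length ns = L + 1"
    and "\<forall>i \<le> L. ns ! i \<ge> 1"
    and "\<forall>l. 1 \<le> l \<and> l < L \<longrightarrow> admissible_activation (s l)"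
    and "s L = id"
    and "\<forall>l. 1 \<le> l \<and> l \<le> L \<longrightarrow> b l \<in> carrier_vec (ns ! l)"
    and "X \<subseteq> carrier_vec (ns ! 0)"
    and "compact (vec_embed ` X)"
    and "W1 \<in> weight_space ns"
    and "\<not> full_rank_weights W1"
    and "\<epsilon> > 0"
  shows "\<exists>W2 \<in> weight_space ns. full_rank_weights W2 \<and>
           (\<forall>x \<in> X. max_norm (net s b W2 x - net s b W1 x) \<le> \<epsilon>)"
proof -
  have lip: "\<exists>C. C-lipschitz_on UNIV (s l)" if "1 \<le> l" "l \<le> L" for l
    using assms(4,5) that lipschitz_on_id unfolding admissible_activation_def id_def
    by (cases "l = L") auto
  have "length W1 = L" using assms(2,9) unfolding weight_space_def by simp
  then have layers: "lipschitz_layers s b 1 ns W1"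
    using assms(2,6,9) lip unfolding lipschitz_layers_def weight_space_def by auto
  obtain B where "B \<ge> 0" and B: "\<forall>x\<in>X. vec_bounded B x"
    using compact_vec_embed_imp_bounded[OF assms(8,7)] by blast
  obtain \<delta> where "\<delta> > 0" and \<delta>: "\<forall>x y Vs. dim_vec x = ns ! 0 \<longrightarrow> vec_bounded B x \<longrightarrow>
      vec_close \<delta> y x \<longrightarrow> weights_close \<delta> Vs W1 \<longrightarrow>
      vec_close \<epsilon> (net_aux 1 s b Vs y) (net_aux 1 s b W1 x)"
    using net_aux_uniformly_continuous[OF layers \<open>B \<ge> 0\<close> \<open>\<epsilon> > 0\<close>] by blast
  obtain W2 where W2: "W2 \<in> weight_space ns" "full_rank_weights W2" "weights_close \<delta> W2 W1"
    using full_rank_weights_dense[OF assms(9) \<open>\<delta> > 0\<close>] by blast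
  have "max_norm (net s b W2 x - net s b W1 x) \<le> \<epsilon>" if "x \<in> X" for x
  proof (rule max_norm_diff_le)
    have x: "dim_vec x = ns ! 0" using assms(7) that by auto
    then show "vec_close \<epsilon> (net s b W2 x) (net s b W1 x)"
      using \<delta> B W2(3) that vec_close_refl \<open>\<delta> > 0\<close> unfolding net_def by simp
    have "last ns = ns ! L" using assms(2) last_conv_nth[of ns] by fastforce
    then show "dim_vec (net s b W1 x) > 0"
      using net_aux_dim[OF layers x] assms(3) unfolding net_def by (simp add: Suc_le_eq)
  qed
  then show ?thesis using W2 by blast
qed

end
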